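(* Let $X$ be a Banach lattice with order continuous norm and let $(S_\lambda)_{\lambda\in\Lambda}$ be a family of convex monotone semigroups on $X$ such that $\{S_\lambda(t)x:\lambda\in\Lambda\}$ is bounded above for all $x\in X$ and $t>0$. Assume that for every $t\ge 0$ there is a bounded operator $C(t)\colon X\to X$ with $J_\pi x\le C(t)x$ for all $\pi\in P_t$ and $x\in X$. Then the semigroup envelope $S=(S(t))_{t\ge0}$ of $(S_\lambda)_{\lambda\in\Lambda}$ exists, is a convex monotone semigroup, and is given by $S(t)x=\sup_{\pi\in P_t}J_\pi x$ for all $t\ge0$, $x\in X$. If moreover $C(t)x\to x$ as $t\downarrow 0$ for all $x\in X$ and $S_{\lambda_0}$ is a $C_0$-semigroup for some $\lambda_0\in\Lambda$, then $S$ is a $C_0$-semigroup. Moreover, if $S_\lambda$ is sublinear for all $\lambda\in\Lambda$, then $S$ is sublinear.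
   Context: A Banach lattice $X$ has order continuous norm if $\|x_\alpha\|\to 0$ for every net $x_\alpha\downarrow 0$ (then every nonempty subset bounded above has a supremum). An operator $T\colon X\to X$ is convex if $T(\lambda x+(1-\lambda)y)\le\lambda Tx+(1-\lambda)Ty$, monotone if $x\le y\Rightarrow Tx\le Ty$, positive homogeneous if $T(\lambda x)=\lambda Tx$ for $\lambda>0$, sublinear if convex and positive homogeneous, bounded if $\sup_{\|x\|\le r}\|Tx\|<\infty$ for all $r>0$. A semigroup on $X$ is a family $(S(t))_{t\ge0}$ of bounded operators $X\to X$ with $S(0)=\mathrm{id}$ and $S(t+s)=S(t)S(s)$; it is a $C_0$-semigroup if additionally $S(t)x\to x$ as $t\downarrow0$ for all $x$; it is convex/monotone/sublinear if every $S(t)$ is. For semigroups $S,T$ write $S\le T$ if $S(t)x\le T(t)x$ for all $t,x$. A semigroup $S$ is an upper bound of $(S_\lambda)$ if $S\ge S_\lambda$ for all $\lambda$, and the (upper) semigroup envelope is the smallest upper bound. Let $P$ be the set of finite sets $\pi\subset[0,\infty)$ with $0\in\pi$, and $P_t:=\{\pi\in P:\max\pi=t\}$. Define $J_hx:=\sup_{\lambda\in\Lambda}S_\lambda(h)x$ for $h>0$ (and $J_0=\mathrm{id}$), and for $\pi=\{t_0,\dots,t_m\}$ with $0=t_0<t_1<\dots<t_m$, $J_\pi x:=J_{t_1-t_0}\cdots J_{t_m-t_{m-1}}x$ ($J_{\{0\}}=\mathrm{id}$). *)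

theory Defs
  imports "HOL-Analysis.Analysis"
begin

definition lat_abs :: "'a::{ordered_real_vector, lattice} \<Rightarrow> 'a" where
  "lat_abs x = sup x (- x)"

definition banach_lattice :: "'a::{banach, ordered_real_vector, lattice} itself \<Rightarrow> bool" where
  "banach_lattice _ \<longleftrightarrow> (\<forall>x y::'a. lat_abs x \<le> lat_abs y \<longrightarrow> norm x \<le> norm y)"

definition is_lub :: "'a::order \<Rightarrow> 'a set \<Rightarrow> bool" where
  "is_lub s A \<longleftrightarrow> (\<forall>a\<in>A. a \<le> s) \<and> (\<forall>u. (\<forall>a\<in>A. a \<le> u) \<longrightarrow> s \<le> u)"

definition lub_of :: "'a::order set \<Rightarrow> 'a" where
  "lub_of A = (THE s. is_lub s A)"

(* A decreasing net x_alpha \<down> 0: its index set D \<subseteq> X is downward directed,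
   indexed by itself with the reversed order; infimum 0. Convergence along the net
   is convergence along the filter of tails {y \<in> D. y \<le> d}. *)
definition net_down_to_zero :: "'a::{ordered_real_vector, lattice} set \<Rightarrow> bool" where
  "net_down_to_zero D \<longleftrightarrow> D \<noteq> {} \<and> (\<forall>x\<in>D. \<forall>y\<in>D. \<exists>z\<in>D. z \<le> x \<and> z \<le> y) \<and>
     (\<forall>x\<in>D. 0 \<le> x) \<and> (\<forall>u. (\<forall>x\<in>D. u \<le> x) \<longrightarrow> u \<le> 0)"

definition tails_filter :: "'a::order set \<Rightarrow> 'a filter" where
  "tails_filter D = (INF d\<in>D. principal {y\<in>D. y \<le> d})"

definition order_continuous_norm :: "'a::{banach, ordered_real_vector, lattice} itself \<Rightarrow> bool" where
  "order_continuous_norm _ \<longleftrightarrow>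
     (\<forall>D::'a set. net_down_to_zero D \<longrightarrow> ((\<lambda>x. norm x) \<longlongrightarrow> 0) (tails_filter D))"

definition bounded_op :: "('a::real_normed_vector \<Rightarrow> 'a) \<Rightarrow> bool" where
  "bounded_op T \<longleftrightarrow> (\<forall>r>0. \<exists>M. \<forall>x. norm x \<le> r \<longrightarrow> norm (T x) \<le> M)"

definition convex_op :: "('a::ordered_real_vector \<Rightarrow> 'a) \<Rightarrow> bool" where
  "convex_op T \<longleftrightarrow> (\<forall>x y. \<forall>\<mu>::real. 0 \<le> \<mu> \<and> \<mu> \<le> 1 \<longrightarrow>
      T (\<mu> *\<^sub>R x + (1 - \<mu>) *\<^sub>R y) \<le> \<mu> *\<^sub>R T x + (1 - \<mu>) *\<^sub>R T y)"

definition monotone_op :: "('a::order \<Rightarrow> 'a) \<Rightarrow> bool" where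
  "monotone_op T \<longleftrightarrow> (\<forall>x y. x \<le> y \<longrightarrow> T x \<le> T y)"

definition pos_homogeneous_op :: "('a::real_vector \<Rightarrow> 'a) \<Rightarrow> bool" where
  "pos_homogeneous_op T \<longleftrightarrow> (\<forall>\<mu>::real>0. \<forall>x. T (\<mu> *\<^sub>R x) = \<mu> *\<^sub>R T x)"

definition sublinear_op :: "('a::ordered_real_vector \<Rightarrow> 'a) \<Rightarrow> bool" where
  "sublinear_op T \<longleftrightarrow> convex_op T \<and> pos_homogeneous_op T"

(* semigroups: families S t indexed by t \<ge> 0 (values at t < 0 are irrelevant) *)
definition semigroup :: "(real \<Rightarrow> 'a::real_normed_vector \<Rightarrow> 'a) \<Rightarrow> bool" where
  "semigroup S \<longleftrightarrow> (\<forall>t\<ge>0. bounded_op (S t)) \<and> S 0 = id \<and>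
     (\<forall>t\<ge>0. \<forall>s\<ge>0. S (t + s) = S t \<circ> S s)"

definition C0_semigroup :: "(real \<Rightarrow> 'a::real_normed_vector \<Rightarrow> 'a) \<Rightarrow> bool" where
  "C0_semigroup S \<longleftrightarrow> semigroup S \<and> (\<forall>x. ((\<lambda>t. S t x) \<longlongrightarrow> x) (at_right 0))"

definition convex_sg :: "(real \<Rightarrow> 'a::{real_normed_vector, ordered_real_vector} \<Rightarrow> 'a) \<Rightarrow> bool" where
  "convex_sg S \<longleftrightarrow> (\<forall>t\<ge>0. convex_op (S t))"

definition monotone_sg :: "(real \<Rightarrow> 'a::{real_normed_vector, order} \<Rightarrow> 'a) \<Rightarrow> bool" where
  "monotone_sg S \<longleftrightarrow> (\<forall>t\<ge>0. monotone_op (S t))"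

definition sublinear_sg :: "(real \<Rightarrow> 'a::{real_normed_vector, ordered_real_vector} \<Rightarrow> 'a) \<Rightarrow> bool" where
  "sublinear_sg S \<longleftrightarrow> (\<forall>t\<ge>0. sublinear_op (S t))"

definition sg_le :: "(real \<Rightarrow> 'a::order \<Rightarrow> 'a) \<Rightarrow> (real \<Rightarrow> 'a \<Rightarrow> 'a) \<Rightarrow> bool" where
  "sg_le S T \<longleftrightarrow> (\<forall>t\<ge>0. \<forall>x. S t x \<le> T t x)"

definition is_upper_bound_sg ::
  "('l \<Rightarrow> real \<Rightarrow> 'a::{real_normed_vector, order} \<Rightarrow> 'a) \<Rightarrow> 'l set \<Rightarrow> (real \<Rightarrow> 'a \<Rightarrow> 'a) \<Rightarrow> bool" where
  "is_upper_bound_sg F Lam S \<longleftrightarrow> semigroup S \<and> (\<forall>l\<in>Lam. sg_le (F l) S)"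

definition is_envelope ::
  "('l \<Rightarrow> real \<Rightarrow> 'a::{real_normed_vector, order} \<Rightarrow> 'a) \<Rightarrow> 'l set \<Rightarrow> (real \<Rightarrow> 'a \<Rightarrow> 'a) \<Rightarrow> bool" where
  "is_envelope F Lam S \<longleftrightarrow> is_upper_bound_sg F Lam S \<and>
     (\<forall>T. is_upper_bound_sg F Lam T \<longrightarrow> sg_le S T)"

definition partitions :: "real \<Rightarrow> real set set" where
  "partitions t = {\<pi>. finite \<pi> \<and> \<pi> \<subseteq> {0..} \<and> 0 \<in> \<pi> \<and> Max \<pi> = t}"

definition J_op :: "('l \<Rightarrow> real \<Rightarrow> 'a::order \<Rightarrow> 'a) \<Rightarrow> 'l set \<Rightarrow> real \<Rightarrow> 'a \<Rightarrow> 'a" where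
  "J_op F Lam h x = (if h = 0 then x else lub_of {F l h x | l. l \<in> Lam})"

fun J_list :: "(real \<Rightarrow> 'a \<Rightarrow> 'a) \<Rightarrow> real list \<Rightarrow> 'a \<Rightarrow> 'a" where
  "J_list J (a # b # rest) x = J (b - a) (J_list J (b # rest) x)"
| "J_list J _ x = x"

definition J_part :: "('l \<Rightarrow> real \<Rightarrow> 'a::order \<Rightarrow> 'a) \<Rightarrow> 'l set \<Rightarrow> real set \<Rightarrow> 'a \<Rightarrow> 'a" where
  "J_part F Lam \<pi> x = J_list (J_op F Lam) (sorted_list_of_set \<pi>) x"

end

theory Submission
  imports Defs
begin

(* Order continuity of the norm makes X Dedekind complete (bounded directed sets are norm-Cauchy
   along their upper-bound gaps) and makes every convex, monotone, bounded operator preserve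
   suprema of directed sets. Hence J_h x exists, and so do the iterates J_pi. Since
   J_(a+b) <= J_a J_b, inserting a point into pi can only increase J_pi x, so the values J_pi x
   over P_t form a directed set, bounded by C(t)x; its supremum is S(t)x. Splitting a partition
   of [0, t+s] at t gives S(t+s) <= S(t)S(s); concatenating partitions and using that J_pi
   preserves directed suprema gives the converse. Every upper-bound semigroup T satisfies
   J_pi <= T(t), so S is the least one. Convexity, monotonicity and homogeneity pass from the
   S_lambda to J_h, J_pi and S; boundedness and strong continuity follow from the sandwich
   S_lambda0(t) <= S(t) <= C(t), since the norm is monotone on the positive cone. *)

section \<open>Norm and order in a Banach lattice\<close>

lemma lat_abs_eq_self: "0 \<le> x \<Longrightarrow> lat_abs x = (x::'a::{ordered_real_vector, lattice})"
  unfolding lat_abs_def by (rule sup_absorb1) (meson neg_le_0_iff_le order_trans)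

lemma lat_abs_nonneg: "0 \<le> lat_abs (x::'a::{ordered_real_vector, lattice})"
proof -
  let ?q = "sup x (- x)"
  have "x + - x \<le> ?q + ?q" by (intro add_mono) auto
  then have "0 \<le> (1/2::real) *\<^sub>R (?q + ?q)" by (intro scaleR_nonneg_nonneg) simp_all
  then show ?thesis unfolding lat_abs_def by (simp add: scaleR_2[symmetric])
qed

context
  assumes BL: "banach_lattice TYPE('a::{banach, ordered_real_vector, lattice})"
begin

lemma banach_lattice_norm_mono:
  fixes x y :: 'a
  assumes "0 \<le> x" "x \<le> y"
  shows "norm x \<le> norm y"
  using BL assms unfolding banach_lattice_def by (metis lat_abs_eq_self order_trans)

lemma banach_lattice_norm_diff_le:
  fixes a b c :: 'a
  assumes "a \<le> b" "b \<le> c"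
  shows "norm (b - a) \<le> norm (c - a)"
  using banach_lattice_norm_mono[of "b - a" "c - a"] assms by simp

lemma banach_lattice_norm_pos_part: "norm (sup x 0) \<le> norm (x::'a)"
proof -
  have "lat_abs (sup x 0) = sup x 0" by (simp add: lat_abs_eq_self)
  also have "\<dots> \<le> lat_abs x" using lat_abs_nonneg[of x] unfolding lat_abs_def by auto
  finally show ?thesis using BL unfolding banach_lattice_def by blast
qed

lemma banach_lattice_le_zeroI:
  fixes v :: 'a
  assumes small: "\<And>e. e > 0 \<Longrightarrow> \<exists>w. v \<le> w \<and> norm w < e"
  shows "v \<le> 0"
proof -
  have pos_part_small: "norm (sup v 0) < e" if "e > 0" for e
  proof -
    obtain w where w: "v \<le> w" "norm w < e" using small[OF \<open>e > 0\<close>] by blast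
    have "norm (sup v 0) \<le> norm (sup w 0)"
      using w by (intro banach_lattice_norm_mono) (auto intro: sup.coboundedI1)
    also have "\<dots> \<le> norm w" by (rule banach_lattice_norm_pos_part)
    finally show ?thesis using w by simp
  qed
  have "\<not> 0 < norm (sup v 0)" using pos_part_small[of "norm (sup v 0)"] by auto
  then have "sup v 0 = 0" by simp
  then show ?thesis by (metis sup.cobounded1)
qed

lemma banach_lattice_tendsto_le:
  fixes X :: "nat \<Rightarrow> 'a"
  assumes "X \<longlonglongrightarrow> x" "\<And>n. X n \<le> y"
  shows "x \<le> y"
proof -
  have "x - y \<le> 0"
  proof (rule banach_lattice_le_zeroI)
    fix e :: real assume "e > 0"
    then obtain n where "norm (X n - x) < e"
      using assms(1) unfolding LIMSEQ_def dist_norm by blast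
    moreover have "x - y \<le> x - X n" using assms(2) by (simp add: diff_left_mono)
    ultimately show "\<exists>w. x - y \<le> w \<and> norm w < e" by (metis norm_minus_commute)
  qed
  then show ?thesis by simp
qed

lemma banach_lattice_le_tendsto:
  fixes X :: "nat \<Rightarrow> 'a"
  assumes "X \<longlonglongrightarrow> x" "\<And>n. y \<le> X n"
  shows "y \<le> x"
  using banach_lattice_tendsto_le[of "\<lambda>n. - X n" "- x" "- y"] assms
  by (simp add: tendsto_minus)

lemma banach_lattice_archimedean:
  fixes v w :: 'a
  assumes "\<And>n::nat. real n *\<^sub>R v \<le> w"
  shows "v \<le> 0"
proof (rule banach_lattice_le_tendsto)
  show "(\<lambda>n. inverse (real (Suc n)) *\<^sub>R w) \<longlonglongrightarrow> 0"
    using tendsto_scaleR[OF LIMSEQ_inverse_real_of_nat tendsto_const[of w]] by simp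
  fix n
  have "v = inverse (real (Suc n)) *\<^sub>R (real (Suc n) *\<^sub>R v)" by simp
  also have "\<dots> \<le> inverse (real (Suc n)) *\<^sub>R w" by (intro scaleR_left_mono assms) simp
  finally show "v \<le> inverse (real (Suc n)) *\<^sub>R w" .
qed

lemma banach_lattice_tendsto_sandwich:
  fixes f g h :: "'b \<Rightarrow> 'a"
  assumes order: "eventually (\<lambda>t. f t \<le> g t \<and> g t \<le> h t) F"
    and f: "(f \<longlongrightarrow> x) F" and h: "(h \<longlongrightarrow> x) F"
  shows "(g \<longlongrightarrow> x) F"
proof -
  have bound: "((\<lambda>t. norm (h t - x) + 2 * norm (f t - x)) \<longlongrightarrow> 0) F"
    using tendsto_add[OF tendsto_norm_zero[OF LIM_zero[OF h]]
        tendsto_mult[OF tendsto_const tendsto_norm_zero[OF LIM_zero[OF f]]]] by simp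
  have "eventually (\<lambda>t. norm (g t - x) \<le> norm (h t - x) + 2 * norm (f t - x)) F"
    using order
  proof (rule eventually_mono)
    fix t assume "f t \<le> g t \<and> g t \<le> h t"
    then have "norm (g t - f t) \<le> norm (h t - f t)" by (intro banach_lattice_norm_diff_le) auto
    moreover have "norm (g t - x) \<le> norm (g t - f t) + norm (f t - x)"
      using norm_triangle_ineq[of "g t - f t" "f t - x"] by simp
    moreover have "norm (h t - f t) \<le> norm (h t - x) + norm (f t - x)"
      using norm_triangle_ineq4[of "h t - x" "f t - x"] by simp
    ultimately show "norm (g t - x) \<le> norm (h t - x) + 2 * norm (f t - x)" by linarith
  qed
  then have "((\<lambda>t. g t - x) \<longlongrightarrow> 0) F" using bound by (rule Lim_null_comparison)
  then show ?thesis by (simp add: LIM_zero_iff)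
qed

lemma bounded_op_sandwich:
  fixes L T U :: "'a \<Rightarrow> 'a"
  assumes "bounded_op L" "bounded_op U" "\<And>x. L x \<le> T x" "\<And>x. T x \<le> U x"
  shows "bounded_op T"
  unfolding bounded_op_def
proof (intro allI impI)
  fix r :: real assume "r > 0"
  then obtain Lbound Ubound where Lbound: "\<And>x. norm x \<le> r \<Longrightarrow> norm (L x) \<le> Lbound"
    and Ubound: "\<And>x. norm x \<le> r \<Longrightarrow> norm (U x) \<le> Ubound"
    using assms(1,2) unfolding bounded_op_def by meson
  have "norm (T x) \<le> 2 * Lbound + Ubound" if "norm x \<le> r" for x
  proof -
    have "norm (T x) \<le> norm (L x) + norm (T x - L x)"
      using norm_triangle_ineq[of "L x" "T x - L x"] by simp
    also have "norm (T x - L x) \<le> norm (U x - L x)"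
      using assms(3,4) by (rule banach_lattice_norm_diff_le)
    also have "norm (U x - L x) \<le> norm (U x) + norm (L x)" by (rule norm_triangle_ineq4)
    finally show ?thesis using Lbound[OF that] Ubound[OF that] by linarith
  qed
  then show "\<exists>M. \<forall>x. norm x \<le> r \<longrightarrow> norm (T x) \<le> M" by blast
qed

end

section \<open>Dedekind completeness and order continuity\<close>

lemma is_lubI:
  "(\<And>a. a \<in> A \<Longrightarrow> a \<le> s) \<Longrightarrow> (\<And>u. (\<And>a. a \<in> A \<Longrightarrow> a \<le> u) \<Longrightarrow> s \<le> u) \<Longrightarrow> is_lub s A"
  unfolding is_lub_def by blast

lemma is_lub_upper: "is_lub s A \<Longrightarrow> a \<in> A \<Longrightarrow> a \<le> s"
  unfolding is_lub_def by blast

lemma is_lub_least: "is_lub s A \<Longrightarrow> (\<And>a. a \<in> A \<Longrightarrow> a \<le> u) \<Longrightarrow> s \<le> u"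
  unfolding is_lub_def by blast

lemma is_lub_unique: "is_lub s A \<Longrightarrow> is_lub s' A \<Longrightarrow> s = (s'::'a::order)"
  unfolding is_lub_def by (meson order.antisym)

lemma lub_of_eqI: "is_lub s A \<Longrightarrow> lub_of A = s"
  unfolding lub_of_def using is_lub_unique by blast

lemma is_lub_scaleR:
  fixes A :: "'a::ordered_real_vector set"
  assumes lub: "is_lub s A" and "\<mu> > 0"
  shows "is_lub (\<mu> *\<^sub>R s) ((*\<^sub>R) \<mu> ` A)"
proof (rule is_lubI)
  fix b assume "b \<in> (*\<^sub>R) \<mu> ` A"
  then show "b \<le> \<mu> *\<^sub>R s" using assms by (auto intro: scaleR_left_mono is_lub_upper)
next
  fix u assume u: "\<And>b. b \<in> (*\<^sub>R) \<mu> ` A \<Longrightarrow> b \<le> u"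
  have "a \<le> inverse \<mu> *\<^sub>R u" if "a \<in> A" for a
    using scaleR_left_mono[OF u[OF imageI[OF that]], of "inverse \<mu>"] \<open>\<mu> > 0\<close> by simp
  then have "s \<le> inverse \<mu> *\<^sub>R u" by (rule is_lub_least[OF lub])
  then show "\<mu> *\<^sub>R s \<le> u"
    using scaleR_left_mono[of s "inverse \<mu> *\<^sub>R u" \<mu>] \<open>\<mu> > 0\<close> by simp
qed

definition upward_directed :: "'a::order set \<Rightarrow> bool" where
  "upward_directed A \<longleftrightarrow> (\<forall>a\<in>A. \<forall>b\<in>A. \<exists>c\<in>A. a \<le> c \<and> b \<le> c)"

lemma upward_directed_image:
  "upward_directed A \<Longrightarrow> (\<And>x y. x \<le> y \<Longrightarrow> f x \<le> f y) \<Longrightarrow> upward_directed (f ` A)"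
  unfolding upward_directed_def by (metis image_iff)

lemma upward_directed_finite_bound:
  assumes "upward_directed A" "A \<noteq> {}" "finite B" "B \<subseteq> A"
  shows "\<exists>c\<in>A. \<forall>b\<in>B. b \<le> c"
  using assms(3,4)
proof (induction B rule: finite_induct)
  case empty
  then show ?case using assms(2) by auto
next
  case (insert x B)
  then obtain c where "c \<in> A" "\<forall>b\<in>B. b \<le> c" by auto
  moreover obtain d where "d \<in> A" "x \<le> d" "c \<le> d"
    using assms(1) insert \<open>c \<in> A\<close> unfolding upward_directed_def by blast
  ultimately show ?case by (intro bexI[of _ d]) (auto intro: order_trans)
qed

lemma order_continuous_normD:
  fixes D :: "'a::{banach, ordered_real_vector, lattice} set"
  assumes OC: "order_continuous_norm TYPE('a)" and D: "net_down_to_zero D" and "e > 0"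
  shows "\<exists>d\<in>D. norm d < e"
proof -
  have "((\<lambda>x. norm x) \<longlongrightarrow> 0) (tails_filter D)"
    using OC D unfolding order_continuous_norm_def by blast
  then have ev: "eventually (\<lambda>x. norm x < e) (tails_filter D)"
    using \<open>e > 0\<close> by (rule order_tendstoD(2))
  have ne: "D \<noteq> {}" and dir: "\<forall>x\<in>D. \<forall>y\<in>D. \<exists>z\<in>D. z \<le> x \<and> z \<le> y"
    using D unfolding net_down_to_zero_def by auto
  have "eventually (\<lambda>x. norm x < e) (INF d\<in>D. principal {y\<in>D. y \<le> d}) \<longleftrightarrow>
     (\<exists>d\<in>D. eventually (\<lambda>x. norm x < e) (principal {y\<in>D. y \<le> d}))"
  proof (rule eventually_INF_base[OF ne])
    fix a b assume "a \<in> D" "b \<in> D"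
    then obtain z where "z \<in> D" "z \<le> a" "z \<le> b" using dir by blast
    then show "\<exists>x\<in>D. principal {y \<in> D. y \<le> x} \<le>
        inf (principal {y \<in> D. y \<le> a}) (principal {y \<in> D. y \<le> b})"
      by (intro bexI[of _ z]) (auto intro: order_trans)
  qed
  with ev show ?thesis unfolding tails_filter_def eventually_principal by auto
qed

lemma is_lub_directed_approx:
  fixes A :: "'a::{banach, ordered_real_vector, lattice} set"
  assumes OC: "order_continuous_norm TYPE('a)"
    and "A \<noteq> {}" "upward_directed A" "is_lub x A" "e > 0"
  shows "\<exists>a\<in>A. norm (x - a) < e"
proof -
  have "net_down_to_zero ((\<lambda>a. x - a) ` A)"
    unfolding net_down_to_zero_def
  proof (intro conjI ballI allI impI)
    fix p q assume "p \<in> (\<lambda>a. x - a) ` A" "q \<in> (\<lambda>a. x - a) ` A"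
    then obtain a b where "p = x - a" "q = x - b" "a \<in> A" "b \<in> A" by blast
    moreover obtain c where "c \<in> A" "a \<le> c" "b \<le> c"
      using assms(3) \<open>a \<in> A\<close> \<open>b \<in> A\<close> unfolding upward_directed_def by blast
    ultimately show "\<exists>z\<in>(\<lambda>a. x - a) ` A. z \<le> p \<and> z \<le> q" by (auto intro!: diff_left_mono)
  next
    fix v assume "\<forall>p\<in>(\<lambda>a. x - a) ` A. v \<le> p"
    then have "x \<le> x - v" by (intro is_lub_least[OF assms(4)]) (auto simp: algebra_simps)
    then show "v \<le> 0" by simp
  qed (use assms(2) is_lub_upper[OF assms(4)] in auto)
  then show ?thesis using order_continuous_normD[OF OC _ \<open>e > 0\<close>] by blast
qed

lemma convex_op_diff_le:
  fixes T :: "'a::ordered_real_vector \<Rightarrow> 'a"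
  assumes "convex_op T" "0 < \<mu>" "\<mu> \<le> 1"
  shows "T x - T a \<le> \<mu> *\<^sub>R (T (a + inverse \<mu> *\<^sub>R (x - a)) - T a)"
proof -
  have "x = \<mu> *\<^sub>R (a + inverse \<mu> *\<^sub>R (x - a)) + (1 - \<mu>) *\<^sub>R a"
    using assms(2) by (simp add: algebra_simps)
  then have "T x \<le> \<mu> *\<^sub>R T (a + inverse \<mu> *\<^sub>R (x - a)) + (1 - \<mu>) *\<^sub>R T a"
    using assms unfolding convex_op_def by (metis less_imp_le)
  then show ?thesis by (simp add: algebra_simps)
qed

text \<open>Write \<open>x = \<mu> z + (1 - \<mu>) a\<close>; then \<open>z\<close> stays in a fixed ball, where \<open>T\<close> is bounded.\<close>

lemma convex_op_diff_le_small:
  fixes T :: "'a::{real_normed_vector, ordered_real_vector} \<Rightarrow> 'a"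
  assumes convex: "convex_op T" and M: "\<And>z. norm z \<le> norm x + 2 \<Longrightarrow> norm (T z) \<le> M"
    and \<mu>: "0 < \<mu>" "\<mu> \<le> 1" and a: "norm (x - a) < \<mu>"
  shows "\<exists>w. T x - T a \<le> w \<and> norm w \<le> 2 * M * \<mu>"
proof (intro exI conjI)
  define z where "z = a + inverse \<mu> *\<^sub>R (x - a)"
  show "T x - T a \<le> \<mu> *\<^sub>R (T z - T a)"
    unfolding z_def using convex \<mu> by (rule convex_op_diff_le)
  have norm_a: "norm a \<le> norm x + 1"
    using norm_triangle_ineq4[of x "x - a"] a \<mu> by simp
  have "norm (inverse \<mu> *\<^sub>R (x - a)) \<le> 1"
    unfolding norm_scaleR using a \<mu> by (simp add: field_simps)
  then have "norm z \<le> norm x + 2"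
    unfolding z_def using norm_triangle_ineq[of a "inverse \<mu> *\<^sub>R (x - a)"] norm_a by linarith
  then have "norm (T z - T a) \<le> 2 * M"
    using M[of z] M[of a] norm_a norm_triangle_ineq4[of "T z" "T a"] by simp
  then show "norm (\<mu> *\<^sub>R (T z - T a)) \<le> 2 * M * \<mu>"
    using \<mu> mult_left_mono[of "norm (T z - T a)" "2 * M" \<mu>] by (simp add: mult.commute)
qed

context
  assumes BL: "banach_lattice TYPE('a::{banach, ordered_real_vector, lattice})"
    and OC: "order_continuous_norm TYPE('a)"
begin

text \<open>A common lower bound \<open>v\<close> of the gaps \<open>y - a\<close> can be subtracted from an upper bound
  arbitrarily often, so \<open>v \<le> 0\<close>: the gaps decrease to \<open>0\<close>.\<close>

lemma directed_upper_gap_small: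
  fixes A :: "'a set"
  assumes ne: "A \<noteq> {}" and dir: "upward_directed A" and y0: "\<forall>a\<in>A. a \<le> y0" and "e > 0"
  shows "\<exists>y a. (\<forall>b\<in>A. b \<le> y) \<and> a \<in> A \<and> norm (y - a) < e"
proof -
  define U where "U = {y. \<forall>a\<in>A. a \<le> y}"
  define E where "E = {y - a | y a. y \<in> U \<and> a \<in> A}"
  have "net_down_to_zero E"
    unfolding net_down_to_zero_def
  proof (intro conjI ballI allI impI)
    show "E \<noteq> {}" using ne y0 unfolding E_def U_def by blast
  next
    fix p q assume "p \<in> E" "q \<in> E"
    then obtain y1 a1 y2 a2 where pq: "p = y1 - a1" "q = y2 - a2"
      and in_U: "y1 \<in> U" "y2 \<in> U" and in_A: "a1 \<in> A" "a2 \<in> A"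
      unfolding E_def by blast
    obtain c where c: "c \<in> A" "a1 \<le> c" "a2 \<le> c" using dir in_A unfolding upward_directed_def by blast
    have "inf y1 y2 \<in> U" using in_U unfolding U_def by auto
    with c(1) have "inf y1 y2 - c \<in> E" unfolding E_def by blast
    moreover have "inf y1 y2 - c \<le> p" "inf y1 y2 - c \<le> q" unfolding pq using c by (auto intro!: diff_mono)
    ultimately show "\<exists>z\<in>E. z \<le> p \<and> z \<le> q" by blast
  next
    fix p assume "p \<in> E" then show "0 \<le> p" unfolding E_def U_def by auto
  next
    fix v assume v: "\<forall>p\<in>E. v \<le> p"
    have step: "y - v \<in> U" if "y \<in> U" for y
    proof -
      have "v \<le> y - a" if "a \<in> A" for a using v \<open>y \<in> U\<close> that unfolding E_def by blast
      then show ?thesis unfolding U_def by (simp add: algebra_simps)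
    qed
    have "y0 - real n *\<^sub>R v \<in> U" for n
    proof (induction n)
      case (Suc n)
      then show ?case using step[OF Suc] by (simp add: algebra_simps)
    qed (use y0 U_def in simp)
    obtain a0 where "a0 \<in> A" using ne by blast
    then have "real n *\<^sub>R v \<le> y0 - a0" for n
      using \<open>y0 - real n *\<^sub>R v \<in> U\<close> unfolding U_def by (force simp: algebra_simps)
    then show "v \<le> 0" by (rule banach_lattice_archimedean[OF BL])
  qed
  then obtain d where "d \<in> E" "norm d < e" using order_continuous_normD[OF OC _ \<open>e > 0\<close>] by blast
  then show ?thesis unfolding E_def U_def by blast
qed

text \<open>Take upper bounds \<open>y n\<close> and elements \<open>a n\<close> with gaps below \<open>1 / (n + 1)\<close>; upper bounds
  \<open>b m \<in> A\<close> of \<open>a 0, \<dots>, a m\<close> form a Cauchy sequence, and its limit is the supremum.\<close>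

lemma ex_is_lub_directed:
  fixes A :: "'a set"
  assumes ne: "A \<noteq> {}" and dir: "upward_directed A" and bounded: "\<forall>a\<in>A. a \<le> y0"
  shows "\<exists>s. is_lub s A"
proof -
  have "\<forall>n. \<exists>y a. (\<forall>b\<in>A. b \<le> y) \<and> a \<in> A \<and> norm (y - a) < inverse (real (Suc n))"
    using directed_upper_gap_small[OF ne dir bounded] by simp
  then obtain y a where y: "\<And>n b. b \<in> A \<Longrightarrow> b \<le> y n" and a: "\<And>n. a n \<in> A"
    and gap: "\<And>n. norm (y n - a n) < inverse (real (Suc n))"
    by metis
  have "\<forall>m. \<exists>c\<in>A. \<forall>b\<in>a ` {..m}. b \<le> c"
    using a by (intro allI upward_directed_finite_bound[OF dir ne]) auto
  then obtain b where b: "\<And>m. b m \<in> A" and a_le_b: "\<And>m n. n \<le> m \<Longrightarrow> a n \<le> b m"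
    by (metis atMost_iff image_eqI)
  have close: "norm (y n - b m) < inverse (real (Suc n))" if "n \<le> m" for n m
  proof -
    have "norm (y n - b m) \<le> norm (y n - a n)"
      using y[OF b] a_le_b[OF that] by (intro banach_lattice_norm_mono[OF BL]) (auto intro: diff_left_mono)
    then show ?thesis using gap[of n] by linarith
  qed
  have "Cauchy b"
  proof (rule metric_CauchyI)
    fix e :: real assume "e > 0"
    then obtain N where N: "inverse (real (Suc N)) < e / 2" using reals_Archimedean half_gt_zero by blast
    have "dist (b m) (b k) < e" if "N \<le> m" "N \<le> k" for m k
    proof -
      have "dist (b m) (b k) \<le> norm (y N - b k) + norm (y N - b m)"
        using norm_triangle_ineq4[of "y N - b k" "y N - b m"] by (simp add: dist_norm)
      then show ?thesis using close[OF that(1)] close[OF that(2)] N by linarith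
    qed
    then show "\<exists>M. \<forall>m\<ge>M. \<forall>n\<ge>M. dist (b m) (b n) < e" by blast
  qed
  then obtain s where b_lim: "b \<longlonglongrightarrow> s" using Cauchy_convergent_iff convergent_def by blast
  have "(\<lambda>n. y n - b n) \<longlonglongrightarrow> 0"
    using close[OF order_refl]
    by (intro Lim_null_comparison[OF always_eventually LIMSEQ_inverse_real_of_nat])
      (auto intro: less_imp_le)
  from tendsto_add[OF this b_lim] have y_lim: "y \<longlonglongrightarrow> s" by simp
  show ?thesis
  proof (intro exI is_lubI)
    show "c \<le> s" if "c \<in> A" for c using y_lim y[OF that] by (rule banach_lattice_le_tendsto[OF BL])
    show "s \<le> u" if "\<And>c. c \<in> A \<Longrightarrow> c \<le> u" for u
      using b_lim that[OF b] by (rule banach_lattice_tendsto_le[OF BL])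
  qed
qed

lemma ex_is_lub:
  fixes A :: "'a set"
  assumes ne: "A \<noteq> {}" and bounded: "\<forall>a\<in>A. a \<le> y0"
  shows "\<exists>s. is_lub s A"
proof -
  define D where "D = {Sup_fin B | B. finite B \<and> B \<noteq> {} \<and> B \<subseteq> A}"
  have same_bounds: "(\<forall>d\<in>D. d \<le> u) \<longleftrightarrow> (\<forall>a\<in>A. a \<le> u)" for u
  proof
    assume "\<forall>d\<in>D. d \<le> u"
    moreover have "Sup_fin {a} \<in> D" if "a \<in> A" for a unfolding D_def using that by blast
    ultimately show "\<forall>a\<in>A. a \<le> u" by auto
  qed (auto simp: D_def intro!: Sup_fin.boundedI)
  have "D \<noteq> {}" using ne unfolding D_def by blast
  moreover have "\<forall>d\<in>D. d \<le> y0" using same_bounds bounded by blast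
  moreover have "upward_directed D"
    unfolding upward_directed_def
  proof (intro ballI)
    fix d1 d2 assume "d1 \<in> D" "d2 \<in> D"
    then obtain B1 B2 where "d1 = Sup_fin B1" "d2 = Sup_fin B2" "finite B1" "finite B2"
      "B1 \<noteq> {}" "B2 \<noteq> {}" "B1 \<subseteq> A" "B2 \<subseteq> A"
      unfolding D_def by blast
    moreover from this have "Sup_fin (B1 \<union> B2) \<in> D" unfolding D_def by blast
    ultimately show "\<exists>c\<in>D. d1 \<le> c \<and> d2 \<le> c"
      by (intro bexI[of _ "Sup_fin (B1 \<union> B2)"]) (auto simp: Sup_fin.bounded_iff intro: Sup_fin.coboundedI)
  qed
  ultimately obtain s where "is_lub s D" by (metis ex_is_lub_directed)
  then have "is_lub s A" unfolding is_lub_def same_bounds .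
  then show ?thesis ..
qed

lemma is_lub_image_convex_op:
  fixes T :: "'a \<Rightarrow> 'a"
  assumes convex: "convex_op T" and mono: "monotone_op T" and bounded: "bounded_op T"
    and ne: "A \<noteq> {}" and dir: "upward_directed A" and lub: "is_lub x A"
  shows "is_lub (T x) (T ` A)"
proof (rule is_lubI)
  show "b \<le> T x" if "b \<in> T ` A" for b
    using that is_lub_upper[OF lub] mono unfolding monotone_op_def by blast
next
  fix u assume u: "\<And>b. b \<in> T ` A \<Longrightarrow> b \<le> u"
  have "norm x + 2 > 0" by (simp add: add_nonneg_pos)
  then obtain M where M: "\<And>z. norm z \<le> norm x + 2 \<Longrightarrow> norm (T z) \<le> M"
    using bounded unfolding bounded_op_def by blast
  have "norm (T x) \<le> M" by (rule M) simp
  then have "0 \<le> M" using norm_ge_zero order_trans by blast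
  have "T x - u \<le> 0"
  proof (rule banach_lattice_le_zeroI[OF BL])
    fix e :: real assume "e > 0"
    define \<mu> where "\<mu> = min 1 (e / (2 * M + 1))"
    have \<mu>: "0 < \<mu>" "\<mu> \<le> 1" "2 * M * \<mu> < e"
      unfolding \<mu>_def using \<open>e > 0\<close> \<open>0 \<le> M\<close> by (auto simp: min_def field_simps)
    obtain a where "a \<in> A" and "norm (x - a) < \<mu>"
      using is_lub_directed_approx[OF OC ne dir lub \<open>0 < \<mu>\<close>] by blast
    then obtain w where w: "T x - T a \<le> w" "norm w \<le> 2 * M * \<mu>"
      using convex_op_diff_le_small[OF convex M \<mu>(1,2)] by blast
    have "T x - u \<le> T x - T a" using u \<open>a \<in> A\<close> by (simp add: diff_left_mono)
    with w \<mu>(3) show "\<exists>w. T x - u \<le> w \<and> norm w < e" by (meson order_trans le_less_trans)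
  qed
  then show "T x \<le> u" by simp
qed

end

section \<open>Composition along partitions\<close>

lemma Min_le_Max: "finite A \<Longrightarrow> A \<noteq> {} \<Longrightarrow> Min A \<le> Max (A::'a::linorder set)"
  using Max_ge Min_in by blast

lemma finite_nonempty_min_induct [consumes 2, case_names singleton insert_min]:
  fixes P :: "'a::linorder set \<Rightarrow> bool"
  assumes "finite A" "A \<noteq> {}"
    and singleton: "\<And>a. P {a}"
    and insert_min: "\<And>a A. finite A \<Longrightarrow> A \<noteq> {} \<Longrightarrow> a < Min A \<Longrightarrow> P A \<Longrightarrow> P (insert a A)"
  shows "P A"
proof -
  have "A \<noteq> {} \<longrightarrow> P A"
    using \<open>finite A\<close>
  proof (induction A rule: finite_linorder_min_induct)
    case (insert b A)
    then show ?case using singleton insert_min by (cases "A = {}") auto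
  qed simp
  with \<open>A \<noteq> {}\<close> show ?thesis by blast
qed

lemma J_part_singleton [simp]: "J_part F Lam {a} x = x"
  unfolding J_part_def by simp

lemma J_part_insert_min:
  assumes "finite \<pi>" "\<pi> \<noteq> {}" "a < Min \<pi>"
  shows "J_part F Lam (insert a \<pi>) x = J_op F Lam (Min \<pi> - a) (J_part F Lam \<pi> x)"
proof -
  have "\<forall>b\<in>\<pi>. a < b" using assms by simp
  then have "\<pi> - {a} = \<pi>" by blast
  then have "sorted_list_of_set (insert a \<pi>) = a # sorted_list_of_set \<pi>"
    using \<open>\<forall>b\<in>\<pi>. a < b\<close> assms(1) by (simp add: insort_is_Cons less_imp_le)
  moreover have "sorted_list_of_set \<pi> = Min \<pi> # sorted_list_of_set (\<pi> - {Min \<pi>})"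
    using assms(1,2) by (rule sorted_list_of_set_nonempty)
  ultimately show ?thesis unfolding J_part_def by simp
qed

lemma J_part_translate:
  assumes "finite \<pi>"
  shows "J_part F Lam ((+) c ` \<pi>) x = J_part F Lam \<pi> x"
proof -
  have J_list_translate: "J_list J (map ((+) c) xs) y = J_list J xs y" for J :: "real \<Rightarrow> 'a \<Rightarrow> 'a" and xs y
    by (induction J xs y rule: J_list.induct) simp_all
  have "sorted_list_of_set ((+) c ` \<pi>) = map ((+) c) (sorted_list_of_set \<pi>)"
    using assms by (intro sorted_list_of_set_unique[THEN iffD1]) (auto simp: sorted_wrt_map card_image inj_on_def)
  then show ?thesis unfolding J_part_def by (simp add: J_list_translate)
qed

lemma J_part_Un:
  assumes "finite \<pi>" "\<pi> \<noteq> {}" "finite \<sigma>" "\<sigma> \<noteq> {}" "Max \<pi> = Min \<sigma>"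
  shows "J_part F Lam (\<pi> \<union> \<sigma>) x = J_part F Lam \<pi> (J_part F Lam \<sigma> x)"
  using assms(1,2,5)
proof (induction \<pi> rule: finite_nonempty_min_induct)
  case (singleton a)
  then have "{a} \<union> \<sigma> = \<sigma>" using assms(3,4) Min_in by fastforce
  then show ?case by simp
next
  case (insert_min a \<pi>)
  have "a < Max \<pi>" using insert_min(3) Min_le_Max[OF insert_min(1,2)] by linarith
  then have "Max \<pi> = Min \<sigma>" using insert_min by simp
  with \<open>a < Max \<pi>\<close> have "a < Min \<sigma>" by linarith
  then have "Min (\<pi> \<union> \<sigma>) = Min \<pi>" "a < Min (\<pi> \<union> \<sigma>)"
    using insert_min assms(3,4) Min_le_Max[of \<pi>] \<open>Max \<pi> = Min \<sigma>\<close> by (simp_all add: Min_Un)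
  then show ?case using insert_min assms(3) by (simp add: J_part_insert_min)
qed

lemma partitionsD:
  assumes "\<pi> \<in> partitions t"
  shows "finite \<pi>" "\<pi> \<noteq> {}" "0 \<in> \<pi>" "t \<in> \<pi>" "Min \<pi> = 0" "Max \<pi> = t" "\<pi> \<subseteq> {0..t}" "0 \<le> t"
proof -
  show fin: "finite \<pi>" and "0 \<in> \<pi>" and Max: "Max \<pi> = t"
    using assms unfolding partitions_def by auto
  then show "\<pi> \<noteq> {}" "t \<in> \<pi>" using Max_in by auto
  show "Min \<pi> = 0" using assms \<open>0 \<in> \<pi>\<close> unfolding partitions_def by (intro Min_eqI) auto
  show "\<pi> \<subseteq> {0..t}" using assms Max_ge[OF fin] Max unfolding partitions_def by auto
  then show "0 \<le> t" using \<open>t \<in> \<pi>\<close> by auto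
qed

lemma partitionsI: "finite \<pi> \<Longrightarrow> \<pi> \<subseteq> {0..t} \<Longrightarrow> 0 \<in> \<pi> \<Longrightarrow> t \<in> \<pi> \<Longrightarrow> \<pi> \<in> partitions t"
  unfolding partitions_def by (auto intro!: Max_eqI)

lemma doubleton_in_partitions: "0 \<le> t \<Longrightarrow> {0, t} \<in> partitions t"
  by (rule partitionsI) auto

lemma partitions_zero: "partitions 0 = {{0}}"
proof (intro equalityI subsetI)
  fix \<pi> assume "\<pi> \<in> partitions 0"
  then have "\<pi> \<subseteq> {0..0}" "0 \<in> \<pi>" using partitionsD(3,7) by blast+
  then show "\<pi> \<in> {{0}}" by auto
qed (auto intro: partitionsI)

lemma partitions_Un: "\<pi> \<in> partitions t \<Longrightarrow> \<pi>' \<in> partitions t \<Longrightarrow> \<pi> \<union> \<pi>' \<in> partitions t"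
  using partitionsD[of \<pi> t] partitionsD[of \<pi>' t] by (intro partitionsI) auto

lemma partitions_concat:
  assumes "\<pi> \<in> partitions t" "\<pi>' \<in> partitions s"
  shows "\<pi> \<union> (+) t ` \<pi>' \<in> partitions (t + s)"
proof (rule partitionsI)
  note \<pi> = partitionsD[OF assms(1)] and \<pi>' = partitionsD[OF assms(2)]
  show "finite (\<pi> \<union> (+) t ` \<pi>')" using \<pi>(1) \<pi>'(1) by simp
  show "\<pi> \<union> (+) t ` \<pi>' \<subseteq> {0..t + s}" using \<pi>(7,8) \<pi>'(7,8) by (auto simp: subset_eq)
  show "0 \<in> \<pi> \<union> (+) t ` \<pi>'" using \<pi>(3) by simp
  show "t + s \<in> \<pi> \<union> (+) t ` \<pi>'" using \<pi>'(4) by simp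
qed

lemma J_part_concat:
  assumes "\<pi> \<in> partitions t" "\<pi>' \<in> partitions s"
  shows "J_part F Lam (\<pi> \<union> (+) t ` \<pi>') x = J_part F Lam \<pi> (J_part F Lam \<pi>' x)"
proof -
  have "Min ((+) t ` \<pi>') = t"
    using partitionsD[OF assms(2)] by (subst mono_Min_commute[symmetric]) (auto simp: mono_def)
  then have "J_part F Lam (\<pi> \<union> (+) t ` \<pi>') x = J_part F Lam \<pi> (J_part F Lam ((+) t ` \<pi>') x)"
    using partitionsD[OF assms(1)] partitionsD[OF assms(2)] by (intro J_part_Un) auto
  then show ?thesis using partitionsD(1)[OF assms(2)] by (simp add: J_part_translate)
qed

lemma partitions_split:
  assumes "\<sigma> \<in> partitions (t + s)" "0 \<le> t" "0 \<le> s"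
  obtains \<pi> \<pi>' where "\<pi> \<in> partitions t" "\<pi>' \<in> partitions s" "insert t \<sigma> = \<pi> \<union> (+) t ` \<pi>'"
proof
  note \<sigma> = partitionsD[OF assms(1)]
  define upper where "upper = {r \<in> insert t \<sigma>. t \<le> r}"
  show "{r \<in> insert t \<sigma>. r \<le> t} \<in> partitions t"
    using \<sigma> assms(2) by (intro partitionsI) auto
  have "upper \<subseteq> {t..t + s}" "t \<in> upper" "t + s \<in> upper" "finite upper"
    using \<sigma> assms(3) unfolding upper_def by auto
  then show "(\<lambda>r. r - t) ` upper \<in> partitions s"
  proof (intro partitionsI)
    show "(\<lambda>r. r - t) ` upper \<subseteq> {0..s}" using \<open>upper \<subseteq> {t..t + s}\<close> by auto
    show "0 \<in> (\<lambda>r. r - t) ` upper" using \<open>t \<in> upper\<close> by (rule rev_image_eqI) simp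
    show "s \<in> (\<lambda>r. r - t) ` upper" using \<open>t + s \<in> upper\<close> by (rule rev_image_eqI) simp
  qed simp
  have shift_back: "(+) t ` (\<lambda>r. r - t) ` upper = upper" by (simp add: image_image)
  show "insert t \<sigma> = {r \<in> insert t \<sigma>. r \<le> t} \<union> (+) t ` (\<lambda>r. r - t) ` upper"
    unfolding shift_back unfolding upper_def by auto
qed

section \<open>Suprema over the family and their iterates\<close>

locale convex_monotone_family =
  fixes F :: "'l \<Rightarrow> real \<Rightarrow> 'a::{banach, ordered_real_vector, lattice} \<Rightarrow> 'a"
    and Lam :: "'l set"
  assumes BL: "banach_lattice TYPE('a)"
    and OC: "order_continuous_norm TYPE('a)"
    and nonempty: "Lam \<noteq> {}"
    and sg: "\<forall>l\<in>Lam. semigroup (F l) \<and> convex_sg (F l) \<and> monotone_sg (F l)"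
    and bdd: "\<forall>x. \<forall>t>0. \<exists>u. \<forall>l\<in>Lam. F l t x \<le> u"
begin

abbreviation J :: "real \<Rightarrow> 'a \<Rightarrow> 'a" where "J \<equiv> J_op F Lam"

lemma F_semigroup: "l \<in> Lam \<Longrightarrow> semigroup (F l)"
  using sg by blast

lemma F_add: "l \<in> Lam \<Longrightarrow> 0 \<le> a \<Longrightarrow> 0 \<le> b \<Longrightarrow> F l (a + b) x = F l a (F l b x)"
  using F_semigroup unfolding semigroup_def by simp

lemma F_convex: "l \<in> Lam \<Longrightarrow> 0 \<le> h \<Longrightarrow> convex_op (F l h)"
  using sg unfolding convex_sg_def by blast

lemma F_monotone: "l \<in> Lam \<Longrightarrow> 0 \<le> h \<Longrightarrow> monotone_op (F l h)"
  using sg unfolding monotone_sg_def by blast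

lemma F_bounded: "l \<in> Lam \<Longrightarrow> 0 \<le> h \<Longrightarrow> bounded_op (F l h)"
  using F_semigroup unfolding semigroup_def by blast

lemma F_mono: "l \<in> Lam \<Longrightarrow> 0 \<le> h \<Longrightarrow> x \<le> y \<Longrightarrow> F l h x \<le> F l h y"
  using F_monotone unfolding monotone_op_def by blast

lemma J_is_lub: "0 < h \<Longrightarrow> is_lub (J h x) {F l h x | l. l \<in> Lam}"
proof -
  assume "0 < h"
  then obtain u where "\<forall>l\<in>Lam. F l h x \<le> u" using bdd by blast
  then have bounded: "\<forall>y\<in>{F l h x | l. l \<in> Lam}. y \<le> u" by blast
  have "{F l h x | l. l \<in> Lam} \<noteq> {}" using nonempty by blast
  from ex_is_lub[OF BL OC this bounded]
  obtain s where lub: "is_lub s {F l h x | l. l \<in> Lam}" ..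
  then show ?thesis using \<open>0 < h\<close> unfolding J_op_def by (simp add: lub_of_eqI[OF lub])
qed

lemma J_zero [simp]: "J 0 x = x"
  unfolding J_op_def by simp

lemma F_le_J: "l \<in> Lam \<Longrightarrow> 0 \<le> h \<Longrightarrow> F l h x \<le> J h x"
proof (cases "h = 0")
  case True
  assume "l \<in> Lam"
  then show ?thesis using True F_semigroup unfolding semigroup_def by simp
next
  case False
  assume "l \<in> Lam" "0 \<le> h"
  then show ?thesis using False by (intro is_lub_upper[OF J_is_lub]) auto
qed

lemma J_le: "0 < h \<Longrightarrow> (\<And>l. l \<in> Lam \<Longrightarrow> F l h x \<le> u) \<Longrightarrow> J h x \<le> u"
  by (erule is_lub_least[OF J_is_lub]) auto

lemma J_mono:
  assumes "0 \<le> h" "x \<le> y"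
  shows "J h x \<le> J h y"
proof (cases "h = 0")
  case False
  show ?thesis
  proof (rule J_le)
    fix l assume "l \<in> Lam"
    then have "F l h x \<le> F l h y" using F_mono assms by blast
    also have "\<dots> \<le> J h y" using F_le_J \<open>l \<in> Lam\<close> assms(1) by blast
    finally show "F l h x \<le> J h y" .
  qed (use False assms in simp)
qed (use assms in simp)

lemma J_convex:
  assumes "0 \<le> h" "0 \<le> \<mu>" "\<mu> \<le> 1"
  shows "J h (\<mu> *\<^sub>R x + (1 - \<mu>) *\<^sub>R y) \<le> \<mu> *\<^sub>R J h x + (1 - \<mu>) *\<^sub>R J h y"
proof (cases "h = 0")
  case False
  show ?thesis
  proof (rule J_le)
    fix l assume "l \<in> Lam"
    have "F l h (\<mu> *\<^sub>R x + (1 - \<mu>) *\<^sub>R y) \<le> \<mu> *\<^sub>R F l h x + (1 - \<mu>) *\<^sub>R F l h y"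
      using F_convex[OF \<open>l \<in> Lam\<close> \<open>0 \<le> h\<close>] assms unfolding convex_op_def by blast
    also have "\<dots> \<le> \<mu> *\<^sub>R J h x + (1 - \<mu>) *\<^sub>R J h y"
      using assms F_le_J[OF \<open>l \<in> Lam\<close> \<open>0 \<le> h\<close>] by (intro add_mono scaleR_left_mono) auto
    finally show "F l h (\<mu> *\<^sub>R x + (1 - \<mu>) *\<^sub>R y) \<le> \<mu> *\<^sub>R J h x + (1 - \<mu>) *\<^sub>R J h y" .
  qed (use False assms in simp)
qed simp

lemma J_add_le:
  assumes "0 \<le> a" "0 \<le> b"
  shows "J (a + b) x \<le> J a (J b x)"
proof (cases "a + b = 0")
  case False
  show ?thesis
  proof (rule J_le)
    fix l assume "l \<in> Lam"
    have "F l (a + b) x = F l a (F l b x)" using F_add[OF \<open>l \<in> Lam\<close> assms] .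
    also have "\<dots> \<le> F l a (J b x)" using F_mono F_le_J \<open>l \<in> Lam\<close> assms by blast
    also have "\<dots> \<le> J a (J b x)" using F_le_J \<open>l \<in> Lam\<close> assms by blast
    finally show "F l (a + b) x \<le> J a (J b x)" .
  qed (use False assms in simp)
qed (use assms in \<open>simp add: add_nonneg_eq_0_iff\<close>)

lemma is_lub_image_J:
  assumes "0 \<le> h" "A \<noteq> {}" "upward_directed A" "is_lub x A"
  shows "is_lub (J h x) (J h ` A)"
proof (cases "h = 0")
  case False
  show ?thesis
  proof (rule is_lubI)
    show "b \<le> J h x" if "b \<in> J h ` A" for b
      using that is_lub_upper[OF assms(4)] J_mono[OF assms(1)] by blast
    fix u assume u: "\<And>b. b \<in> J h ` A \<Longrightarrow> b \<le> u"
    show "J h x \<le> u"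
    proof (rule J_le)
      fix l assume l: "l \<in> Lam"
      have "is_lub (F l h x) (F l h ` A)"
        using is_lub_image_convex_op[OF BL OC F_convex F_monotone F_bounded] l assms by blast
      then show "F l h x \<le> u"
      proof (rule is_lub_least)
        fix b assume "b \<in> F l h ` A"
        then obtain a where "a \<in> A" "b = F l h a" by blast
        then show "b \<le> u" using F_le_J[OF l assms(1), of a] u[of "J h a"] by auto
      qed
    qed (use False assms in simp)
  qed
qed (use assms in simp)

lemma J_scaleR:
  assumes sublinear: "\<forall>l\<in>Lam. sublinear_sg (F l)" and "0 \<le> h" "0 < \<mu>"
  shows "J h (\<mu> *\<^sub>R x) = \<mu> *\<^sub>R J h x"
proof (cases "h = 0")
  case False
  with \<open>0 \<le> h\<close> have "0 < h" by simp
  have "F l h (\<mu> *\<^sub>R x) = \<mu> *\<^sub>R F l h x" if "l \<in> Lam" for l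
    using sublinear that assms(2,3)
    unfolding sublinear_sg_def sublinear_op_def pos_homogeneous_op_def by blast
  then have "{F l h (\<mu> *\<^sub>R x) | l. l \<in> Lam} = (*\<^sub>R) \<mu> ` {F l h x | l. l \<in> Lam}"
    by (simp add: Setcompr_eq_image image_image cong: image_cong)
  then have "is_lub (\<mu> *\<^sub>R J h x) {F l h (\<mu> *\<^sub>R x) | l. l \<in> Lam}"
    using is_lub_scaleR[OF J_is_lub[OF \<open>0 < h\<close>] \<open>0 < \<mu>\<close>] by simp
  with J_is_lub[OF \<open>0 < h\<close>] show ?thesis by (rule is_lub_unique)
qed simp

lemma J_part_mono:
  assumes "finite \<pi>" "\<pi> \<noteq> {}" "x \<le> y"
  shows "J_part F Lam \<pi> x \<le> J_part F Lam \<pi> y"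
  using assms
proof (induction \<pi> arbitrary: x y rule: finite_nonempty_min_induct)
  case (insert_min a \<pi>)
  have "0 \<le> Min \<pi> - a" using insert_min(3) by linarith
  then show ?case using insert_min by (simp add: J_part_insert_min J_mono)
qed simp

lemma J_part_convex:
  assumes "finite \<pi>" "\<pi> \<noteq> {}" "0 \<le> \<mu>" "\<mu> \<le> 1"
  shows "J_part F Lam \<pi> (\<mu> *\<^sub>R x + (1 - \<mu>) *\<^sub>R y) \<le>
    \<mu> *\<^sub>R J_part F Lam \<pi> x + (1 - \<mu>) *\<^sub>R J_part F Lam \<pi> y"
  using assms(1,2)
proof (induction \<pi> arbitrary: x y rule: finite_nonempty_min_induct)
  case (insert_min a \<pi>)
  let ?h = "Min \<pi> - a"
  have "0 \<le> ?h" using insert_min(3) by linarith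
  have "J_part F Lam (insert a \<pi>) (\<mu> *\<^sub>R x + (1 - \<mu>) *\<^sub>R y) =
      J ?h (J_part F Lam \<pi> (\<mu> *\<^sub>R x + (1 - \<mu>) *\<^sub>R y))"
    using insert_min by (simp add: J_part_insert_min)
  also have "\<dots> \<le> J ?h (\<mu> *\<^sub>R J_part F Lam \<pi> x + (1 - \<mu>) *\<^sub>R J_part F Lam \<pi> y)"
    using insert_min \<open>0 \<le> ?h\<close> by (intro J_mono) auto
  also have "\<dots> \<le> \<mu> *\<^sub>R J ?h (J_part F Lam \<pi> x) + (1 - \<mu>) *\<^sub>R J ?h (J_part F Lam \<pi> y)"
    using \<open>0 \<le> ?h\<close> assms(3,4) by (rule J_convex)
  also have "\<dots> = \<mu> *\<^sub>R J_part F Lam (insert a \<pi>) x + (1 - \<mu>) *\<^sub>R J_part F Lam (insert a \<pi>) y"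
    using insert_min by (simp add: J_part_insert_min)
  finally show ?case .
qed simp

lemma J_part_scaleR:
  assumes "\<forall>l\<in>Lam. sublinear_sg (F l)" "finite \<pi>" "\<pi> \<noteq> {}" "0 < \<mu>"
  shows "J_part F Lam \<pi> (\<mu> *\<^sub>R x) = \<mu> *\<^sub>R J_part F Lam \<pi> x"
  using assms(2,3)
proof (induction \<pi> arbitrary: x rule: finite_nonempty_min_induct)
  case (insert_min a \<pi>)
  have "0 \<le> Min \<pi> - a" using insert_min(3) by linarith
  then show ?case using insert_min J_scaleR[OF assms(1) _ assms(4)] by (simp add: J_part_insert_min)
qed simp

lemma is_lub_image_J_part:
  assumes "finite \<pi>" "\<pi> \<noteq> {}" "A \<noteq> {}" "upward_directed A" "is_lub x A"
  shows "is_lub (J_part F Lam \<pi> x) (J_part F Lam \<pi> ` A)"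
  using assms(1,2,5)
proof (induction \<pi> arbitrary: x rule: finite_nonempty_min_induct)
  case (insert_min a \<pi>)
  let ?h = "Min \<pi> - a"
  have "upward_directed (J_part F Lam \<pi> ` A)"
    using assms(4) J_part_mono[OF insert_min(1,2)] by (rule upward_directed_image)
  moreover have "0 \<le> ?h" using insert_min(3) by linarith
  ultimately have "is_lub (J ?h (J_part F Lam \<pi> x)) (J ?h ` J_part F Lam \<pi> ` A)"
    using insert_min assms(3) by (intro is_lub_image_J) auto
  moreover have "J ?h ` J_part F Lam \<pi> ` A = J_part F Lam (insert a \<pi>) ` A"
    using insert_min by (auto simp: J_part_insert_min image_image)
  ultimately show ?case using insert_min by (simp add: J_part_insert_min)
qed simp

text \<open>Refinement increases \<open>J_part\<close>, because \<open>J\<close> is subadditive in time.\<close>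

lemma J_part_insert_ge:
  assumes "finite \<pi>" "\<pi> \<noteq> {}" "Min \<pi> \<le> r" "r \<le> Max \<pi>"
  shows "J_part F Lam \<pi> x \<le> J_part F Lam (insert r \<pi>) x"
  using assms
proof (induction \<pi> arbitrary: x rule: finite_nonempty_min_induct)
  case (insert_min a \<pi>)
  let ?m = "Min \<pi>"
  have "a \<le> r" "r \<le> Max \<pi>" "a < Max \<pi>"
    using insert_min Min_le_Max[OF insert_min(1,2)] by auto
  show ?case
  proof (cases "r \<in> insert a \<pi>")
    case False
    then have "a < r" using \<open>a \<le> r\<close> by auto
    have swap: "insert r (insert a \<pi>) = insert a (insert r \<pi>)" by blast
    show ?thesis
    proof (cases "r < ?m")
      case True
      have "J_part F Lam (insert a \<pi>) x = J ((r - a) + (?m - r)) (J_part F Lam \<pi> x)"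
        using insert_min by (simp add: J_part_insert_min)
      also have "\<dots> \<le> J (r - a) (J (?m - r) (J_part F Lam \<pi> x))"
        using \<open>a < r\<close> True by (intro J_add_le) auto
      also have "\<dots> = J_part F Lam (insert r (insert a \<pi>)) x"
        unfolding swap using insert_min \<open>a < r\<close> True by (simp add: J_part_insert_min)
      finally show ?thesis .
    next
      case False
      have "Min (insert r \<pi>) = min r ?m" using insert_min(1,2) by (rule Min_insert)
      also have "\<dots> = ?m" using False by (intro min_absorb2) linarith
      finally have "Min (insert r \<pi>) = ?m" .
      have "?m \<le> r" using False by linarith
      have "J_part F Lam (insert a \<pi>) x = J (?m - a) (J_part F Lam \<pi> x)"
        using insert_min by (simp add: J_part_insert_min)
      also have "\<dots> \<le> J (?m - a) (J_part F Lam (insert r \<pi>) x)"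
        using insert_min.IH[OF \<open>?m \<le> r\<close> \<open>r \<le> Max \<pi>\<close>] insert_min(3) by (intro J_mono) auto
      also have "\<dots> = J_part F Lam (insert r (insert a \<pi>)) x"
        unfolding swap using insert_min \<open>Min (insert r \<pi>) = ?m\<close> by (simp add: J_part_insert_min)
      finally show ?thesis .
    qed
  qed (simp add: insert_absorb)
qed simp

lemma J_part_refine:
  assumes "finite \<pi>" "\<pi> \<noteq> {}" "finite \<sigma>" "\<sigma> \<subseteq> {Min \<pi>..Max \<pi>}"
  shows "J_part F Lam \<pi> x \<le> J_part F Lam (\<pi> \<union> \<sigma>) x"
  using assms(3,4)
proof (induction \<sigma> rule: finite_induct)
  case (insert r \<sigma>)
  have "Min (\<pi> \<union> \<sigma>) = Min \<pi>" "Max (\<pi> \<union> \<sigma>) = Max \<pi>"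
    using insert assms(1,2) by (auto intro!: Min_eqI Max_eqI Min_in Max_in)
  then have "J_part F Lam (\<pi> \<union> \<sigma>) x \<le> J_part F Lam (insert r (\<pi> \<union> \<sigma>)) x"
    using insert assms(1,2) by (intro J_part_insert_ge) auto
  with insert show ?case by (auto intro: order_trans)
qed simp

lemma J_part_le_upper_bound:
  assumes T: "semigroup T" "\<forall>l\<in>Lam. sg_le (F l) T" and "finite \<pi>" "\<pi> \<noteq> {}"
  shows "J_part F Lam \<pi> x \<le> T (Max \<pi> - Min \<pi>) x"
  using assms(3,4)
proof (induction \<pi> arbitrary: x rule: finite_nonempty_min_induct)
  case (singleton a)
  then show ?case using T(1) unfolding semigroup_def by simp
next
  case (insert_min a \<pi>)
  let ?h = "Min \<pi> - a" and ?d = "Max \<pi> - Min \<pi>"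
  have "0 < ?h" "0 \<le> ?d" using insert_min Min_le_Max[OF insert_min(1,2)] by auto
  have J_le_T: "J ?h y \<le> T ?h y" for y
    using T(2) \<open>0 < ?h\<close> unfolding sg_le_def by (intro J_le) auto
  have "J_part F Lam (insert a \<pi>) x = J ?h (J_part F Lam \<pi> x)"
    using insert_min by (simp add: J_part_insert_min)
  also have "\<dots> \<le> J ?h (T ?d x)" using insert_min \<open>0 < ?h\<close> by (intro J_mono) auto
  also have "\<dots> \<le> T ?h (T ?d x)" by (rule J_le_T)
  also have "T ?h (T ?d x) = T (?h + ?d) x"
  proof -
    have "T (?h + ?d) = T ?h \<circ> T ?d"
      using T(1) less_imp_le[OF \<open>0 < ?h\<close>] \<open>0 \<le> ?d\<close> unfolding semigroup_def by blast
    then show ?thesis by simp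
  qed
  also have "?h + ?d = Max (insert a \<pi>) - Min (insert a \<pi>)"
    using insert_min Min_le_Max[OF insert_min(1,2)] by simp
  finally show ?case .
qed

end

section \<open>The envelope\<close>

lemma J_part_doubleton: "0 \<le> t \<Longrightarrow> J_part F Lam {0, t} x = J_op F Lam t x"
  by (cases "t = 0") (simp_all add: J_op_def J_part_insert_min)

locale dominated_convex_monotone_family = convex_monotone_family F Lam
  for F :: "'l \<Rightarrow> real \<Rightarrow> 'a::{banach, ordered_real_vector, lattice} \<Rightarrow> 'a" and Lam :: "'l set" +
  fixes C :: "real \<Rightarrow> 'a \<Rightarrow> 'a"
  assumes Cbd: "\<forall>t\<ge>0. bounded_op (C t)"
    and JC: "\<forall>t\<ge>0. \<forall>\<pi>\<in>partitions t. \<forall>x. J_part F Lam \<pi> x \<le> C t x"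
begin

abbreviation partition_values :: "real \<Rightarrow> 'a \<Rightarrow> 'a set" where
  "partition_values t x \<equiv> {J_part F Lam \<pi> x | \<pi>. \<pi> \<in> partitions t}"

definition envelope :: "real \<Rightarrow> 'a \<Rightarrow> 'a" where
  "envelope t x = lub_of (partition_values t x)"

lemma envelope_is_lub:
  assumes "0 \<le> t"
  shows "is_lub (envelope t x) (partition_values t x)"
proof -
  have "partition_values t x \<noteq> {}"
    using doubleton_in_partitions[OF assms] by blast
  moreover have "\<forall>y\<in>partition_values t x. y \<le> C t x"
    using JC assms by blast
  ultimately obtain s where lub: "is_lub s (partition_values t x)"
    using ex_is_lub[OF BL OC] by meson
  then show ?thesis unfolding envelope_def by (simp add: lub_of_eqI[OF lub])
qed

lemma J_part_le_envelope: "\<pi> \<in> partitions t \<Longrightarrow> J_part F Lam \<pi> x \<le> envelope t x"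
  using envelope_is_lub[OF partitionsD(8)] by (auto intro: is_lub_upper)

lemma envelope_le:
  "0 \<le> t \<Longrightarrow> (\<And>\<pi>. \<pi> \<in> partitions t \<Longrightarrow> J_part F Lam \<pi> x \<le> u) \<Longrightarrow> envelope t x \<le> u"
  by (erule is_lub_least[OF envelope_is_lub]) blast

lemma upward_directed_partition_values: "upward_directed (partition_values t x)"
  unfolding upward_directed_def
proof (intro ballI)
  fix a b assume "a \<in> partition_values t x" "b \<in> partition_values t x"
  then obtain \<pi> \<pi>' where \<pi>: "\<pi> \<in> partitions t" and \<pi>': "\<pi>' \<in> partitions t"
    and ab: "a = J_part F Lam \<pi> x" "b = J_part F Lam \<pi>' x"
    by blast
  have refine: "J_part F Lam \<rho> x \<le> J_part F Lam (\<rho> \<union> \<rho>') x"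
    if "\<rho> \<in> partitions t" "\<rho>' \<in> partitions t" for \<rho> \<rho>'
    using partitionsD[OF that(1)] partitionsD[OF that(2)] by (intro J_part_refine) auto
  have "a \<le> J_part F Lam (\<pi> \<union> \<pi>') x" using refine[OF \<pi> \<pi>'] by (simp add: ab)
  moreover have "b \<le> J_part F Lam (\<pi> \<union> \<pi>') x" using refine[OF \<pi>' \<pi>] by (simp add: ab Un_commute)
  moreover have "J_part F Lam (\<pi> \<union> \<pi>') x \<in> partition_values t x"
    by (intro CollectI exI[of _ "\<pi> \<union> \<pi>'"] conjI refl partitions_Un[OF \<pi> \<pi>'])
  ultimately show "\<exists>c\<in>partition_values t x. a \<le> c \<and> b \<le> c" by blast
qed

lemma F_le_envelope: "l \<in> Lam \<Longrightarrow> 0 \<le> t \<Longrightarrow> F l t x \<le> envelope t x"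
  using F_le_J J_part_le_envelope[OF doubleton_in_partitions] J_part_doubleton
  by (metis order_trans)

lemma envelope_le_C: "0 \<le> t \<Longrightarrow> envelope t x \<le> C t x"
  using JC by (intro envelope_le) auto

lemma envelope_zero: "envelope 0 = id"
proof
  fix x
  have "is_lub x (partition_values 0 x)"
    unfolding partitions_zero by (auto intro: is_lubI)
  then show "envelope 0 x = id x" unfolding envelope_def by (simp add: lub_of_eqI)
qed

lemma envelope_mono: "0 \<le> t \<Longrightarrow> x \<le> y \<Longrightarrow> envelope t x \<le> envelope t y"
  by (rule envelope_le) (auto intro: order_trans[OF J_part_mono J_part_le_envelope] dest: partitionsD)

lemma envelope_convex:
  assumes "0 \<le> t" "0 \<le> \<mu>" "\<mu> \<le> 1"
  shows "envelope t (\<mu> *\<^sub>R x + (1 - \<mu>) *\<^sub>R y) \<le> \<mu> *\<^sub>R envelope t x + (1 - \<mu>) *\<^sub>R envelope t y"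
proof (rule envelope_le[OF assms(1)])
  fix \<pi> assume \<pi>: "\<pi> \<in> partitions t"
  have "J_part F Lam \<pi> (\<mu> *\<^sub>R x + (1 - \<mu>) *\<^sub>R y) \<le>
      \<mu> *\<^sub>R J_part F Lam \<pi> x + (1 - \<mu>) *\<^sub>R J_part F Lam \<pi> y"
    using partitionsD[OF \<pi>] assms by (intro J_part_convex) auto
  also have "\<dots> \<le> \<mu> *\<^sub>R envelope t x + (1 - \<mu>) *\<^sub>R envelope t y"
    using assms J_part_le_envelope[OF \<pi>] by (intro add_mono scaleR_left_mono) auto
  finally show "J_part F Lam \<pi> (\<mu> *\<^sub>R x + (1 - \<mu>) *\<^sub>R y) \<le> \<dots>" .
qed

lemma envelope_scaleR:
  assumes "\<forall>l\<in>Lam. sublinear_sg (F l)" "0 \<le> t" "0 < \<mu>"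
  shows "envelope t (\<mu> *\<^sub>R x) = \<mu> *\<^sub>R envelope t x"
proof -
  have "partition_values t (\<mu> *\<^sub>R x) = (*\<^sub>R) \<mu> ` partition_values t x"
    using J_part_scaleR[OF assms(1) _ _ assms(3)] partitionsD(1,2)
    by (simp add: Setcompr_eq_image image_image cong: image_cong)
  then have "is_lub (\<mu> *\<^sub>R envelope t x) (partition_values t (\<mu> *\<^sub>R x))"
    using is_lub_scaleR[OF envelope_is_lub[OF assms(2)] assms(3)] by simp
  with envelope_is_lub[OF assms(2)] show ?thesis by (rule is_lub_unique)
qed

lemma envelope_add_le:
  assumes "0 \<le> t" "0 \<le> s"
  shows "envelope (t + s) x \<le> envelope t (envelope s x)"
proof (rule envelope_le)
  fix \<sigma> assume \<sigma>: "\<sigma> \<in> partitions (t + s)"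
  obtain \<pi> \<pi>' where \<pi>: "\<pi> \<in> partitions t" and \<pi>': "\<pi>' \<in> partitions s"
    and split: "insert t \<sigma> = \<pi> \<union> (+) t ` \<pi>'"
    using partitions_split[OF \<sigma> assms] .
  have "J_part F Lam \<sigma> x \<le> J_part F Lam (insert t \<sigma>) x"
    using partitionsD[OF \<sigma>] assms by (intro J_part_insert_ge) auto
  also have "\<dots> = J_part F Lam \<pi> (J_part F Lam \<pi>' x)"
    unfolding split by (rule J_part_concat[OF \<pi> \<pi>'])
  also have "\<dots> \<le> J_part F Lam \<pi> (envelope s x)"
    using partitionsD[OF \<pi>] J_part_le_envelope[OF \<pi>'] by (intro J_part_mono) auto
  also have "\<dots> \<le> envelope t (envelope s x)" by (rule J_part_le_envelope[OF \<pi>])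
  finally show "J_part F Lam \<sigma> x \<le> envelope t (envelope s x)" .
qed (use assms in simp)

text \<open>The converse inequality uses the order continuity of \<open>J_part F Lam \<pi>\<close>.\<close>

lemma envelope_add_ge:
  assumes "0 \<le> t" "0 \<le> s"
  shows "envelope t (envelope s x) \<le> envelope (t + s) x"
proof (rule envelope_le[OF assms(1)])
  fix \<pi> assume \<pi>: "\<pi> \<in> partitions t"
  have "is_lub (J_part F Lam \<pi> (envelope s x)) (J_part F Lam \<pi> ` partition_values s x)"
    using partitionsD[OF \<pi>] envelope_is_lub[OF assms(2)] upward_directed_partition_values
      doubleton_in_partitions[OF assms(2)]
    by (intro is_lub_image_J_part) auto
  then show "J_part F Lam \<pi> (envelope s x) \<le> envelope (t + s) x"
  proof (rule is_lub_least)
    fix b assume "b \<in> J_part F Lam \<pi> ` partition_values s x"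
    then obtain \<pi>' where \<pi>': "\<pi>' \<in> partitions s" and b: "b = J_part F Lam \<pi> (J_part F Lam \<pi>' x)" by blast
    show "b \<le> envelope (t + s) x"
      unfolding b J_part_concat[OF \<pi> \<pi>', symmetric]
      by (rule J_part_le_envelope[OF partitions_concat[OF \<pi> \<pi>']])
  qed
qed

lemma envelope_add: "0 \<le> t \<Longrightarrow> 0 \<le> s \<Longrightarrow> envelope (t + s) x = envelope t (envelope s x)"
  by (rule order.antisym[OF envelope_add_le envelope_add_ge])

lemma semigroup_envelope: "semigroup envelope"
  unfolding semigroup_def
proof (intro conjI allI impI)
  fix t :: real assume "0 \<le> t"
  obtain l where "l \<in> Lam" using nonempty by blast
  show "bounded_op (envelope t)"
    using \<open>l \<in> Lam\<close> \<open>0 \<le> t\<close> Cbd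
    by (intro bounded_op_sandwich[OF BL F_bounded _ F_le_envelope envelope_le_C]) auto
next
  fix t s :: real assume "0 \<le> t" "0 \<le> s"
  then show "envelope (t + s) = envelope t \<circ> envelope s"
    by (simp add: fun_eq_iff envelope_add)
qed (rule envelope_zero)

lemma is_envelope_envelope: "is_envelope F Lam envelope"
  unfolding is_envelope_def
proof (intro conjI allI impI)
  show "is_upper_bound_sg F Lam envelope"
    unfolding is_upper_bound_sg_def sg_le_def using semigroup_envelope F_le_envelope by blast
next
  fix T assume T: "is_upper_bound_sg F Lam T"
  show "sg_le envelope T"
    unfolding sg_le_def
  proof (intro allI impI)
    fix t :: real and x assume "0 \<le> t"
    show "envelope t x \<le> T t x"
    proof (rule envelope_le[OF \<open>0 \<le> t\<close>])
      fix \<pi> assume "\<pi> \<in> partitions t"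
      then show "J_part F Lam \<pi> x \<le> T t x"
        using T J_part_le_upper_bound partitionsD[of \<pi> t] unfolding is_upper_bound_sg_def by force
    qed
  qed
qed

lemma convex_sg_envelope: "convex_sg envelope"
  unfolding convex_sg_def convex_op_def by (intro allI impI envelope_convex) auto

lemma monotone_sg_envelope: "monotone_sg envelope"
  unfolding monotone_sg_def monotone_op_def by (intro allI impI envelope_mono)

lemma sublinear_sg_envelope:
  assumes "\<forall>l\<in>Lam. sublinear_sg (F l)"
  shows "sublinear_sg envelope"
  using convex_sg_envelope envelope_scaleR[OF assms]
  unfolding convex_sg_def sublinear_sg_def sublinear_op_def pos_homogeneous_op_def by simp

lemma C0_semigroup_envelope:
  assumes C: "\<forall>x. ((\<lambda>t. C t x) \<longlongrightarrow> x) (at_right 0)" and "l \<in> Lam" and F: "C0_semigroup (F l)"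
  shows "C0_semigroup envelope"
  unfolding C0_semigroup_def
proof (intro conjI allI semigroup_envelope)
  fix x
  have "eventually (\<lambda>t. F l t x \<le> envelope t x \<and> envelope t x \<le> C t x) (at_right 0)"
    using eventually_at_right_less[of "0::real"]
    by eventually_elim (simp add: F_le_envelope[OF \<open>l \<in> Lam\<close>] envelope_le_C)
  moreover have "((\<lambda>t. F l t x) \<longlongrightarrow> x) (at_right 0)" using F unfolding C0_semigroup_def by blast
  moreover have "((\<lambda>t. C t x) \<longlongrightarrow> x) (at_right 0)" using C by blast
  ultimately show "((\<lambda>t. envelope t x) \<longlongrightarrow> x) (at_right 0)"
    by (rule banach_lattice_tendsto_sandwich[OF BL])
qed

end

theorem theorem4p2:
  fixes F :: "'l \<Rightarrow> real \<Rightarrow> 'a::{banach, ordered_real_vector, lattice} \<Rightarrow> 'a"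
    and Lam :: "'l set"
    and C :: "real \<Rightarrow> 'a \<Rightarrow> 'a"
  assumes BL: "banach_lattice TYPE('a)"
    and OC: "order_continuous_norm TYPE('a)"
    and nonempty: "Lam \<noteq> {}"
    and sg: "\<forall>l\<in>Lam. semigroup (F l) \<and> convex_sg (F l) \<and> monotone_sg (F l)"
    and bdd: "\<forall>x. \<forall>t>0. \<exists>u. \<forall>l\<in>Lam. F l t x \<le> u"
    and Cbd: "\<forall>t\<ge>0. bounded_op (C t)"
    and JC: "\<forall>t\<ge>0. \<forall>\<pi>\<in>partitions t. \<forall>x. J_part F Lam \<pi> x \<le> C t x"
  shows "\<exists>S. is_envelope F Lam S \<and> semigroup S \<and> convex_sg S \<and> monotone_sg S \<and>
     (\<forall>t\<ge>0. \<forall>x. is_lub (S t x) {J_part F Lam \<pi> x | \<pi>. \<pi> \<in> partitions t}) \<and>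
     (((\<forall>x. ((\<lambda>t. C t x) \<longlongrightarrow> x) (at_right 0)) \<and> (\<exists>l0\<in>Lam. C0_semigroup (F l0)))
        \<longrightarrow> C0_semigroup S) \<and>
     ((\<forall>l\<in>Lam. sublinear_sg (F l)) \<longrightarrow> sublinear_sg S)"
proof -
  interpret dominated_convex_monotone_family F Lam C
    by unfold_locales (fact BL OC nonempty sg bdd Cbd JC)+
  show ?thesis
    using is_envelope_envelope semigroup_envelope convex_sg_envelope monotone_sg_envelope
      envelope_is_lub C0_semigroup_envelope sublinear_sg_envelope
    by blast
qed

end
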